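(* Let $F=\{T_1,\dots,T_n\}$ be a finite family of reduction operators relative to a well-ordered set $(G,<)$, let $\tilde F=\{\tilde T_1,\dots,\tilde T_n\}$ be the reduction of $F$, and let $C=\{C_2,\dots,C_n\}$ be the incremental completion of $\tilde F$. Then $F\cup C$ is a completion of $F$.
   Context: Let $\mathbb{K}$ be a field, $(G,<)$ a well-ordered set and $\mathbb{K}G$ the vector space with basis $G$. For $v\neq0$, $\mathrm{lt}(v)$ is the greatest element of $G$ appearing with nonzero coefficient in $v$. Extend $<$ to $\mathbb{K}G$: $u<v$ if $u=0$ and $v\neq0$, or if $\mathrm{lt}(u)<\mathrm{lt}(v)$; $u\le v$ means $u<v$ or $u=v$. A reduction operator is an idempotent linear endomorphism $T$ of $\mathbb{K}G$ with $T(g)\le g$ for all $g\in G$; $\mathrm{nf}(T)=\{g\in G\mid T(g)=g\}$, $\mathrm{red}(T)=G\setminus\mathrm{nf}(T)$. For every subspace $V$ there is a unique reduction operator $\ker^{-1}(V)$ with kernel $V$. $T\vee T'=\ker^{-1}(\ker T\cap\ker T')$. For a set $F$ of reduction operators, $\wedge F=\ker^{-1}(\sum_{T\in F}\ker T)$, $\mathrm{nf}(F)=\bigcap_{T\in F}\mathrm{nf}(T)$, $\mathrm{obs}(F)=\mathrm{nf}(F)\setminus\mathrm{nf}(\wedge F)$; $F$ is confluent if $\mathrm{obs}(F)=\emptyset$; a completion of $F$ is a confluent set $F'$ of reduction operators with $F\subseteq F'$ and $\wedge F'=\wedge F$. For a set $F$, $C^F=(\wedge F)\vee\ker^{-1}(\mathbb{K}\,\mathrm{nf}(F))$,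 where $\mathbb{K}\,\mathrm{nf}(F)$ is the subspace spanned by $\mathrm{nf}(F)$. Syzygies: $\mathbf{ker}(F)=\ker T_1\times\dots\times\ker T_n$, $\pi_F(v_1,\dots,v_n)=v_1+\dots+v_n$, $\mathrm{syz}(F)=\ker\pi_F$. For $g\in\mathrm{red}(T_i)$, $e_{i,g}$ is the tuple with $g-T_i(g)$ at position $i$ and $0$ elsewhere; these form a basis of $\mathbf{ker}(F)$, well-ordered by $e_{i,g}\sqsubset e_{i',g'}$ iff $i<i'$, or $i=i'$ and $g<g'$; $\mathrm{lt}(\mathrm{syz}(F))$ is the set of $\sqsubset$-greatest basis elements appearing in nonzero syzygies. The reduction of $F$ is $\tilde F=\{\tilde T_1,\dots,\tilde T_n\}$ where $\tilde T_i$ is the linear map with $\tilde T_i(g)=g$ if $g\in\mathrm{red}(T_i)$ and $e_{i,g}\in\mathrm{lt}(\mathrm{syz}(F))$, and $\tilde T_i(g)=T_i(g)$ otherwise. Incremental completion of a family $\{S_1,\dots,S_n\}$: set $F_1=\{S_1\}$ and for $2\le i\le n$, $C_i=C^{F_{i-1}\cup\{S_i\}}$ and $F_i=F_{i-1}\cup\{S_i,C_i\}$; the incremental completion is $\{C_2,\dots,C_n\}$. *)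

theory Defs
  imports "HOL-Library.Poly_Mapping"
begin

text \<open>The vector space KG is modelled as finitely supported functions 'g =>0 'k,
  where 'g carries a well-order (type class wellorder) and 'k is a field.\<close>

type_synonym ('g, 'k) vec = "'g \<Rightarrow>\<^sub>0 'k"
type_synonym ('g, 'k) op = "('g, 'k) vec \<Rightarrow> ('g, 'k) vec"

definition bvec :: "'g \<Rightarrow> ('g, 'k::field) vec" where
  "bvec g = Poly_Mapping.single g 1"

definition smul :: "'k::field \<Rightarrow> ('g, 'k) vec \<Rightarrow> ('g, 'k) vec" where
  "smul c v = Poly_Mapping.map (\<lambda>x. c * x) v"

definition lt :: "('g::wellorder, 'k::field) vec \<Rightarrow> 'g" where
  "lt v = Max (Poly_Mapping.keys v)"

definition vless :: "('g::wellorder, 'k::field) vec \<Rightarrow> ('g, 'k) vec \<Rightarrow> bool" where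
  "vless u v \<longleftrightarrow> (u = 0 \<and> v \<noteq> 0) \<or> (u \<noteq> 0 \<and> v \<noteq> 0 \<and> lt u < lt v)"

definition vle :: "('g::wellorder, 'k::field) vec \<Rightarrow> ('g, 'k) vec \<Rightarrow> bool" where
  "vle u v \<longleftrightarrow> vless u v \<or> u = v"

definition is_linear :: "('g, 'k::field) op \<Rightarrow> bool" where
  "is_linear T \<longleftrightarrow> (\<forall>u v. T (u + v) = T u + T v) \<and> (\<forall>c v. T (smul c v) = smul c (T v))"

definition reduction_op :: "('g::wellorder, 'k::field) op \<Rightarrow> bool" where
  "reduction_op T \<longleftrightarrow> is_linear T \<and> (\<forall>v. T (T v) = T v) \<and> (\<forall>g. vle (T (bvec g)) (bvec g))"

definition nf :: "('g::wellorder, 'k::field) op \<Rightarrow> 'g set" where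
  "nf T = {g. T (bvec g) = bvec g}"

definition red :: "('g::wellorder, 'k::field) op \<Rightarrow> 'g set" where
  "red T = UNIV - nf T"

definition kerop :: "('g, 'k::field) op \<Rightarrow> ('g, 'k) vec set" where
  "kerop T = {v. T v = 0}"

text \<open>The unique reduction operator with kernel V (V a subspace).\<close>
definition kerinv :: "('g::wellorder, 'k::field) vec set \<Rightarrow> ('g, 'k) op" where
  "kerinv V = (THE T. reduction_op T \<and> kerop T = V)"

definition join :: "('g::wellorder, 'k::field) op \<Rightarrow> ('g, 'k) op \<Rightarrow> ('g, 'k) op" where
  "join T T' = kerinv (kerop T \<inter> kerop T')"

definition sumker :: "('g::wellorder, 'k::field) op set \<Rightarrow> ('g, 'k) vec set" where
  "sumker F = {(\<Sum>T\<in>A. f T) | A f. finite A \<and> A \<subseteq> F \<and> (\<forall>T\<in>A. f T \<in> kerop T)}"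

definition meet :: "('g::wellorder, 'k::field) op set \<Rightarrow> ('g, 'k) op" where
  "meet F = kerinv (sumker F)"

definition nfF :: "('g::wellorder, 'k::field) op set \<Rightarrow> 'g set" where
  "nfF F = (\<Inter>T\<in>F. nf T)"

definition obs :: "('g::wellorder, 'k::field) op set \<Rightarrow> 'g set" where
  "obs F = nfF F - nf (meet F)"

definition confluent :: "('g::wellorder, 'k::field) op set \<Rightarrow> bool" where
  "confluent F \<longleftrightarrow> obs F = {}"

definition is_completion :: "('g::wellorder, 'k::field) op set \<Rightarrow> ('g, 'k) op set \<Rightarrow> bool" where
  "is_completion F' F \<longleftrightarrow> (\<forall>T\<in>F'. reduction_op T) \<and> confluent F' \<and> F \<subseteq> F' \<and> meet F' = meet F"

definition lspan :: "('g, 'k::field) vec set \<Rightarrow> ('g, 'k) vec set" where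
  "lspan S = {(\<Sum>s\<in>A. smul (c s) s) | A c. finite A \<and> A \<subseteq> S}"

definition CF :: "('g::wellorder, 'k::field) op set \<Rightarrow> ('g, 'k) op" where
  "CF F = join (meet F) (kerinv (lspan (bvec ` nfF F)))"

section \<open>Syzygies of a family given as a list Ts = [T_1,...,T_n] (0-indexed)\<close>

text \<open>Tuples (v_1,...,v_n) are functions nat => vec, zero outside {0..<n}.\<close>

definition kerbold :: "('g::wellorder, 'k::field) op list \<Rightarrow> (nat \<Rightarrow> ('g, 'k) vec) set" where
  "kerbold Ts = {w. (\<forall>i<length Ts. w i \<in> kerop (Ts ! i)) \<and> (\<forall>i\<ge>length Ts. w i = 0)}"

definition syz :: "('g::wellorder, 'k::field) op list \<Rightarrow> (nat \<Rightarrow> ('g, 'k) vec) set" where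
  "syz Ts = {w \<in> kerbold Ts. (\<Sum>i<length Ts. w i) = 0}"

definition ebas :: "('g::wellorder, 'k::field) op list \<Rightarrow> nat \<Rightarrow> 'g \<Rightarrow> (nat \<Rightarrow> ('g, 'k) vec)" where
  "ebas Ts i g = (\<lambda>j. if j = i then bvec g - (Ts ! i) (bvec g) else 0)"

text \<open>Index set of the basis of kerbold: pairs (i,g) with g in red(T_i).\<close>
definition eidx :: "('g::wellorder, 'k::field) op list \<Rightarrow> (nat \<times> 'g) set" where
  "eidx Ts = {(i, g). i < length Ts \<and> g \<in> red (Ts ! i)}"

definition sqless :: "nat \<times> 'g::wellorder \<Rightarrow> nat \<times> 'g \<Rightarrow> bool" where
  "sqless p q \<longleftrightarrow> fst p < fst q \<or> (fst p = fst q \<and> snd p < snd q)"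

text \<open>lt(syz F): the (indices of the) greatest basis elements e_{i,g} appearing with
  nonzero coefficient in the basis expansion of some nonzero syzygy.\<close>
definition lt_syz :: "('g::wellorder, 'k::field) op list \<Rightarrow> (nat \<times> 'g) set" where
  "lt_syz Ts = {p. \<exists>w S c. w \<in> syz Ts \<and> w \<noteq> (\<lambda>_. 0) \<and> finite S \<and> S \<subseteq> eidx Ts
       \<and> (\<forall>q\<in>S. c q \<noteq> 0)
       \<and> w = (\<lambda>j. \<Sum>q\<in>S. smul (c q) (ebas Ts (fst q) (snd q) j))
       \<and> p \<in> S \<and> (\<forall>q\<in>S. q = p \<or> sqless q p)}"

definition lin_ext :: "('g \<Rightarrow> ('g, 'k::field) vec) \<Rightarrow> ('g, 'k) op" where
  "lin_ext f v = (\<Sum>g\<in>Poly_Mapping.keys v. smul (Poly_Mapping.lookup v g) (f g))"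

definition red_family :: "('g::wellorder, 'k::field) op list \<Rightarrow> ('g, 'k) op list" where
  "red_family Ts = map (\<lambda>i. lin_ext (\<lambda>g. if g \<in> red (Ts ! i) \<and> (i, g) \<in> lt_syz Ts
                                       then bvec g else (Ts ! i) (bvec g)))
                       [0..<length Ts]"

section \<open>Incremental completion of a list Ss = [S_1,...,S_n] (0-indexed)\<close>

fun incF :: "('g::wellorder, 'k::field) op list \<Rightarrow> nat \<Rightarrow> ('g, 'k) op set" where
  "incF Ss 0 = {Ss ! 0}"
| "incF Ss (Suc k) = incF Ss k \<union> {Ss ! Suc k, CF (incF Ss k \<union> {Ss ! Suc k})}"

definition incC :: "('g::wellorder, 'k::field) op list \<Rightarrow> ('g, 'k) op set" where
  "incC Ss = {CF (incF Ss (k - 1) \<union> {Ss ! k}) | k. 1 \<le> k \<and> k < length Ss}"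

end

theory Submission
  imports Defs "HOL-Library.Product_Lexorder" "HOL.Vector_Spaces"
begin

text \<open>Passing from F to its reduction does not change the sum K of the kernels: a syzygy with
  leading basis element e_{i,g} writes g - T_i g through generators of smaller index, and for
  every other g the reduced operator already annihilates g - T_i g. Every operator built by the
  incremental completion has kernel inside K, so adding them leaves the meet of F unchanged. For
  confluence it suffices that no nonzero vector of K is supported on the common normal forms.
  Such a vector would lie in the kernel of the last operator C_n, whose kernel is K intersected
  with the span of the normal forms of a family containing the whole reduction, while its leading
  term would be a normal form of C_n.\<close>

section \<open>Vectors and linear maps\<close>

lemma lookup_smul [simp]: "Poly_Mapping.lookup (smul c v) g = c * Poly_Mapping.lookup v g"
  by (simp add: smul_def Poly_Mapping.map.rep_eq when_def)

global_interpretation vec: vector_space "smul :: 'k::field \<Rightarrow> ('g, 'k) vec \<Rightarrow> ('g, 'k) vec"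
  by unfold_locales (auto intro!: poly_mapping_eqI simp: lookup_add algebra_simps)

global_interpretation vec_pair: vector_space_pair
    "smul :: 'k::field \<Rightarrow> ('g, 'k) vec \<Rightarrow> ('g, 'k) vec"
    "smul :: 'k::field \<Rightarrow> ('g, 'k) vec \<Rightarrow> ('g, 'k) vec"
  by unfold_locales

lemma is_linear_linear: "is_linear T \<Longrightarrow> Vector_Spaces.linear smul smul T"
  by (simp add: is_linear_def linear_iff vec.vector_space_axioms)

lemmas is_linear_diff = vec_pair.linear_diff[OF is_linear_linear]
  and is_linear_sum = vec_pair.linear_sum[OF is_linear_linear]
  and is_linear_scale = vec_pair.linear_scale[OF is_linear_linear]

lemma subspace_kerop: "is_linear T \<Longrightarrow> vec.subspace (kerop T)"
  unfolding kerop_def by (rule vec_pair.linear_subspace_kernel[OF is_linear_linear])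

lemma lookup_bvec: "Poly_Mapping.lookup (bvec g :: ('g, 'k::field) vec) h = (if h = g then 1 else 0)"
  by (simp add: bvec_def lookup_single)

lemma keys_bvec [simp]: "Poly_Mapping.keys (bvec g :: ('g, 'k::field) vec) = {g}"
  by (simp add: bvec_def)

lemma bvec_nonzero [simp]: "(bvec g :: ('g, 'k::field) vec) \<noteq> 0"
  using keys_bvec[of g] by (metis empty_not_insert keys_zero)

lemma keys_smul: "Poly_Mapping.keys (smul c v) \<subseteq> Poly_Mapping.keys v"
  by (auto simp: in_keys_iff)

lemma bvec_expansion: "v = (\<Sum>g\<in>Poly_Mapping.keys v. smul (Poly_Mapping.lookup v g) (bvec g))"
proof (rule poly_mapping_eqI)
  fix h
  have "(\<Sum>g\<in>Poly_Mapping.keys v. Poly_Mapping.lookup v g * Poly_Mapping.lookup (bvec g) h)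
      = (\<Sum>g\<in>Poly_Mapping.keys v. if h = g then Poly_Mapping.lookup v g else 0)"
    by (rule sum.cong) (auto simp: lookup_bvec)
  then show "Poly_Mapping.lookup v h
      = Poly_Mapping.lookup (\<Sum>g\<in>Poly_Mapping.keys v. smul (Poly_Mapping.lookup v g) (bvec g)) h"
    by (simp add: lookup_sum in_keys_iff)
qed

lemma lt_in_keys: "v \<noteq> 0 \<Longrightarrow> lt v \<in> Poly_Mapping.keys v"
  unfolding lt_def by (rule Max_in) auto

lemma key_le_lt: "k \<in> Poly_Mapping.keys v \<Longrightarrow> k \<le> lt v"
  unfolding lt_def by (rule Max_ge) auto

lemma lt_eqI:
  "h \<in> Poly_Mapping.keys v \<Longrightarrow> (\<And>k. k \<in> Poly_Mapping.keys v \<Longrightarrow> k \<le> h) \<Longrightarrow> lt v = h"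
  by (metis antisym key_le_lt lt_in_keys keys_zero empty_iff)

lemma lt_bvec [simp]: "lt (bvec g :: ('g::wellorder, 'k::field) vec) = g"
  by (rule lt_eqI) auto

lemma subspace_keys_subset: "vec.subspace {w. Poly_Mapping.keys w \<subseteq> S}"
  unfolding vec.subspace_def using keys_add keys_smul by fastforce

lemma mem_lspan_bvec: "w \<in> lspan (bvec ` S) \<longleftrightarrow> Poly_Mapping.keys w \<subseteq> S"
proof
  assume "w \<in> lspan (bvec ` S)"
  then have "w \<in> vec.span (bvec ` S)" by (simp add: lspan_def vec.span_explicit)
  also have "vec.span (bvec ` S) \<subseteq> {w. Poly_Mapping.keys w \<subseteq> S}"
    by (rule vec.span_minimal[OF _ subspace_keys_subset]) auto
  finally show "Poly_Mapping.keys w \<subseteq> S" by simp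
next
  assume "Poly_Mapping.keys w \<subseteq> S"
  then have "w \<in> vec.span (bvec ` S)"
    by (subst bvec_expansion) (intro vec.span_sum vec.span_scale vec.span_base; auto)
  then show "w \<in> lspan (bvec ` S)" by (simp add: lspan_def vec.span_explicit)
qed

lemma linear_bvec_expansion:
  "is_linear T \<Longrightarrow> T v = (\<Sum>g\<in>Poly_Mapping.keys v. smul (Poly_Mapping.lookup v g) (T (bvec g)))"
  by (subst bvec_expansion) (simp add: is_linear_sum is_linear_scale)

lemma keys_linear_image:
  assumes "is_linear T"
  shows "Poly_Mapping.keys (T v) \<subseteq> (\<Union>g\<in>Poly_Mapping.keys v. Poly_Mapping.keys (T (bvec g)))"
  using keys_sum keys_smul by (subst linear_bvec_expansion[OF assms]) fastforce

lemma linear_fixes_nf_span: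
  assumes "is_linear T" and "Poly_Mapping.keys v \<subseteq> nf T"
  shows "T v = v"
proof -
  have "T v = (\<Sum>g\<in>Poly_Mapping.keys v. smul (Poly_Mapping.lookup v g) (bvec g))"
    using assms by (subst linear_bvec_expansion) (auto simp: nf_def intro!: sum.cong)
  then show ?thesis by (metis bvec_expansion)
qed

lemma kerop_subset_if_reduction_vectors:
  assumes "is_linear T" and "vec.subspace W" and "\<And>g. bvec g - T (bvec g) \<in> W"
  shows "kerop T \<subseteq> W"
proof
  fix v assume "v \<in> kerop T"
  then have "v = v - T v" by (simp add: kerop_def)
  also have "\<dots> = (\<Sum>g\<in>Poly_Mapping.keys v. smul (Poly_Mapping.lookup v g) (bvec g - T (bvec g)))"
    by (subst (1 2) bvec_expansion)
       (simp add: is_linear_sum[OF assms(1)] is_linear_scale[OF assms(1)]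
          vec.scale_right_diff_distrib sum_subtractf)
  also have "\<dots> \<in> W"
    using assms(2,3) by (intro vec.subspace_sum vec.subspace_scale)
  finally show "v \<in> W" .
qed

lemma lin_ext_bvec: "lin_ext f (bvec g) = f g"
  by (simp add: lin_ext_def lookup_bvec)

lemma lin_ext_eq_sum:
  assumes "finite S" and "Poly_Mapping.keys v \<subseteq> S"
  shows "lin_ext f v = (\<Sum>g\<in>S. smul (Poly_Mapping.lookup v g) (f g))"
  unfolding lin_ext_def by (rule sum.mono_neutral_left[OF assms]) (auto simp: in_keys_iff)

lemma is_linear_lin_ext:
  fixes f :: "'g \<Rightarrow> ('g, 'k::field) vec"
  shows "is_linear (lin_ext f)"
  unfolding is_linear_def
proof (intro conjI allI)
  fix u v :: "('g, 'k) vec"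
  let ?S = "Poly_Mapping.keys u \<union> Poly_Mapping.keys v"
  have "lin_ext f (u + v) = (\<Sum>g\<in>?S. smul (Poly_Mapping.lookup (u + v) g) (f g))"
    using keys_add[of u v] by (intro lin_ext_eq_sum) auto
  also have "\<dots> = lin_ext f u + lin_ext f v"
    by (subst (1 2) lin_ext_eq_sum[of ?S])
       (auto simp: lookup_add vec.scale_left_distrib sum.distrib)
  finally show "lin_ext f (u + v) = lin_ext f u + lin_ext f v" .
next
  fix c :: 'k and v :: "('g, 'k) vec"
  have "lin_ext f (smul c v) = (\<Sum>g\<in>Poly_Mapping.keys v. smul (Poly_Mapping.lookup (smul c v) g) (f g))"
    by (intro lin_ext_eq_sum) (simp_all add: keys_smul)
  then show "lin_ext f (smul c v) = smul c (lin_ext f v)"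
    by (simp add: lin_ext_def vec.scale_sum_right)
qed

section \<open>Reduction operators\<close>

lemma reduction_op_linear: "reduction_op T \<Longrightarrow> is_linear T"
  by (simp add: reduction_op_def)

lemma reduction_op_idem: "reduction_op T \<Longrightarrow> T (T v) = T v"
  by (simp add: reduction_op_def)

lemma reduction_op_bvec_cases:
  assumes "reduction_op T"
  obtains "T (bvec g) = bvec g" | "T (bvec g) = 0" | "T (bvec g) \<noteq> 0" and "lt (T (bvec g)) < g"
  using assms by (auto simp: reduction_op_def vle_def vless_def)

lemma reduction_op_keys_le:
  assumes "reduction_op T" and "k \<in> Poly_Mapping.keys (T (bvec g))"
  shows "k \<le> g"
  using assms(1) by (cases rule: reduction_op_bvec_cases[of T g]) (use assms(2) key_le_lt[OF assms(2)] in auto)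

lemma reduction_op_keys_less:
  assumes "reduction_op T" and "g \<in> red T" and "k \<in> Poly_Mapping.keys (T (bvec g))"
  shows "k < g"
  using assms(1)
  by (cases rule: reduction_op_bvec_cases[of T g]) (use assms(2,3) key_le_lt[OF assms(3)] in \<open>auto simp: red_def nf_def\<close>)

lemma keys_reduction_op_bvec: "reduction_op T \<Longrightarrow> Poly_Mapping.keys (T (bvec g)) \<subseteq> nf T"
proof (induction g rule: less_induct)
  case (less g)
  show ?case
  proof (cases "g \<in> nf T")
    case True
    then show ?thesis by (simp add: nf_def)
  next
    case False
    then have "g \<in> red T" by (simp add: red_def)
    have "Poly_Mapping.keys (T (T (bvec g)))
        \<subseteq> (\<Union>j\<in>Poly_Mapping.keys (T (bvec g)). Poly_Mapping.keys (T (bvec j)))"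
      by (rule keys_linear_image[OF reduction_op_linear[OF less.prems]])
    also have "\<dots> \<subseteq> nf T"
      using less.IH[OF reduction_op_keys_less[OF less.prems \<open>g \<in> red T\<close>] less.prems] by blast
    finally show ?thesis by (simp add: reduction_op_idem[OF less.prems])
  qed
qed

lemma keys_reduction_op: "reduction_op T \<Longrightarrow> Poly_Mapping.keys (T w) \<subseteq> nf T"
  using keys_linear_image[OF reduction_op_linear] keys_reduction_op_bvec by blast

text \<open>Only the leading term h of v contributes to the coefficient of h in T v, since the
  other terms are reduced below h; if h were a normal form, T v would not vanish.\<close>
lemma lt_kerop_red:
  assumes T: "reduction_op T" and "T v = 0" and "v \<noteq> 0"
  shows "lt v \<in> red T"
proof (rule ccontr)
  define h where "h = lt v"
  assume "lt v \<notin> red T"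
  then have h_nf: "T (bvec h) = bvec h" by (simp add: h_def red_def nf_def)
  have "Poly_Mapping.lookup v g * Poly_Mapping.lookup (T (bvec g)) h = (if g = h then Poly_Mapping.lookup v g else 0)"
    if "g \<in> Poly_Mapping.keys v" for g
  proof (cases "g = h")
    case False
    with that have "g < h" using key_le_lt[of g v] by (simp add: h_def)
    then have "h \<notin> Poly_Mapping.keys (T (bvec g))" using reduction_op_keys_le[OF T] leD by blast
    with False show ?thesis by (simp add: in_keys_iff)
  qed (simp add: h_nf lookup_bvec)
  then have "Poly_Mapping.lookup (T v) h = Poly_Mapping.lookup v h"
    using lt_in_keys[OF \<open>v \<noteq> 0\<close>]
    by (subst linear_bvec_expansion[OF reduction_op_linear[OF T]]) (simp add: lookup_sum h_def)
  with \<open>T v = 0\<close> lt_in_keys[OF \<open>v \<noteq> 0\<close>] show False by (simp add: h_def in_keys_iff)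
qed

lemma reduction_op_diff_kerop: "reduction_op T \<Longrightarrow> w - T w \<in> kerop T"
  by (simp add: kerop_def is_linear_diff reduction_op_linear reduction_op_idem)

lemma reduction_vector:
  assumes T: "reduction_op T" and "g \<in> red T"
  shows "bvec g - T (bvec g) \<in> kerop T" and "bvec g - T (bvec g) \<noteq> 0"
    and "lt (bvec g - T (bvec g)) = g"
proof -
  show "bvec g - T (bvec g) \<in> kerop T" by (rule reduction_op_diff_kerop[OF T])
  have "g \<notin> Poly_Mapping.keys (T (bvec g))" using reduction_op_keys_less[OF assms] by blast
  then have g_key: "g \<in> Poly_Mapping.keys (bvec g - T (bvec g))"
    by (simp add: in_keys_iff lookup_minus lookup_bvec)
  then show "bvec g - T (bvec g) \<noteq> 0" by auto
  have "k \<le> g" if "k \<in> Poly_Mapping.keys (bvec g - T (bvec g))" for k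
    using that keys_diff[of "bvec g" "T (bvec g)"] reduction_op_keys_le[OF T, of k g] by auto
  then show "lt (bvec g - T (bvec g)) = g" by (rule lt_eqI[OF g_key])
qed

lemma red_subset_if_kerop_subset:
  assumes "reduction_op S" and "reduction_op T" and "kerop S \<subseteq> kerop T"
  shows "red S \<subseteq> red T"
proof
  fix g assume "g \<in> red S"
  note e = reduction_vector[OF assms(1) this]
  from e(1) assms(3) have "T (bvec g - S (bvec g)) = 0" by (auto simp: kerop_def)
  from lt_kerop_red[OF assms(2) this e(2)] show "g \<in> red T" by (simp add: e(3))
qed

lemma kerop_nf_span_zero:
  assumes "reduction_op T" and "T v = 0" and "Poly_Mapping.keys v \<subseteq> nf T"
  shows "v = 0"
proof (rule ccontr)
  assume "v \<noteq> 0"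
  with assms show False using lt_kerop_red[OF assms(1,2)] lt_in_keys[of v] by (auto simp: red_def)
qed

section \<open>The reduction operator with a given kernel\<close>

definition leading_terms :: "('g::wellorder, 'k::field) vec set \<Rightarrow> 'g set" where
  "leading_terms V = {lt v | v. v \<in> V \<and> v \<noteq> 0}"

lemma lt_in_leading_terms: "v \<in> V \<Longrightarrow> v \<noteq> 0 \<Longrightarrow> lt v \<in> leading_terms V"
  by (auto simp: leading_terms_def)

text \<open>The reduction operator with kernel V maps w to its remainder modulo V: the unique r with
  w - r in V and no key of r a leading term of V.\<close>
lemma remainder_unique:
  assumes V: "vec.subspace V"
    and "w - r1 \<in> V" "Poly_Mapping.keys r1 \<inter> leading_terms V = {}"
    and "w - r2 \<in> V" "Poly_Mapping.keys r2 \<inter> leading_terms V = {}"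
  shows "r1 = r2"
proof (rule ccontr)
  assume "r1 \<noteq> r2"
  then have "r2 - r1 \<noteq> 0" by simp
  moreover have "r2 - r1 \<in> V"
    using vec.subspace_diff[OF V assms(2) assms(4)] by (simp add: algebra_simps)
  ultimately have "lt (r2 - r1) \<in> leading_terms V" by (rule lt_in_leading_terms[rotated])
  moreover have "lt (r2 - r1) \<in> Poly_Mapping.keys r1 \<union> Poly_Mapping.keys r2"
    using lt_in_keys[OF \<open>r2 - r1 \<noteq> 0\<close>] keys_diff[of r2 r1] by blast
  ultimately show False using assms(3,5) by blast
qed

lemma reduce_leading_term:
  assumes V: "vec.subspace V" and w: "Poly_Mapping.keys w \<subseteq> {..h}"
  obtains d c where "d \<in> V" and "Poly_Mapping.keys (w - d - Poly_Mapping.single h c) \<subseteq> {..<h}"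
    and "c \<noteq> 0 \<Longrightarrow> h \<notin> leading_terms V"
proof -
  obtain d where d: "d \<in> V" "Poly_Mapping.keys d \<subseteq> {..h}"
    and d_h: "h \<in> leading_terms V \<Longrightarrow> Poly_Mapping.lookup d h = Poly_Mapping.lookup w h"
  proof (cases "h \<in> leading_terms V")
    case True
    then obtain v where v: "v \<in> V" "v \<noteq> 0" "lt v = h" by (auto simp: leading_terms_def)
    then have "Poly_Mapping.lookup v h \<noteq> 0" using lt_in_keys[of v] by (simp add: in_keys_iff)
    moreover have "Poly_Mapping.keys (smul (Poly_Mapping.lookup w h / Poly_Mapping.lookup v h) v) \<subseteq> {..h}"
      using keys_smul[of _ v] key_le_lt[of _ v] v(3) by auto
    ultimately show ?thesis
      using that[of "smul (Poly_Mapping.lookup w h / Poly_Mapping.lookup v h) v"]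
        vec.subspace_scale[OF V v(1)] by simp
  next
    case False
    then show ?thesis using that[of 0] vec.subspace_0[OF V] by simp
  qed
  define c where "c = Poly_Mapping.lookup (w - d) h"
  have "Poly_Mapping.keys (w - d - Poly_Mapping.single h c)
      \<subseteq> Poly_Mapping.keys w \<union> Poly_Mapping.keys d \<union> {h}"
    using keys_diff[of "w - d" "Poly_Mapping.single h c"] keys_diff[of w d] by (auto split: if_splits)
  then have "Poly_Mapping.keys (w - d - Poly_Mapping.single h c) \<subseteq> {..h}" using w d(2) by auto
  moreover have "h \<notin> Poly_Mapping.keys (w - d - Poly_Mapping.single h c)"
    by (simp add: c_def in_keys_iff lookup_minus)
  ultimately have "Poly_Mapping.keys (w - d - Poly_Mapping.single h c) \<subseteq> {..<h}"
    by (auto simp: order.order_iff_strict)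
  moreover have "c \<noteq> 0 \<Longrightarrow> h \<notin> leading_terms V" using d_h by (auto simp: c_def lookup_minus)
  ultimately show ?thesis using that d(1) by blast
qed

lemma remainder_exists:
  assumes V: "vec.subspace V"
  shows "\<exists>r. w - r \<in> V \<and> Poly_Mapping.keys r \<inter> leading_terms V = {}"
proof (induction "lt w" arbitrary: w rule: less_induct)
  case less
  show ?case
  proof (cases "w = 0")
    case True
    then show ?thesis using vec.subspace_0[OF V] by (intro exI[of _ 0]) simp
  next
    case False
    obtain d c where d: "d \<in> V"
      and keys_w': "Poly_Mapping.keys (w - d - Poly_Mapping.single (lt w) c) \<subseteq> {..<lt w}"
      and c: "c \<noteq> 0 \<Longrightarrow> lt w \<notin> leading_terms V"
      using reduce_leading_term[OF V, of w "lt w"] key_le_lt[of _ w] by blast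
    define w' where "w' = w - d - Poly_Mapping.single (lt w) c"
    obtain r' where r': "w' - r' \<in> V" "Poly_Mapping.keys r' \<inter> leading_terms V = {}"
    proof (cases "w' = 0")
      case True
      then show ?thesis using that[of 0] vec.subspace_0[OF V] by simp
    next
      case False
      then have "lt w' < lt w" using lt_in_keys[of w'] keys_w' by (auto simp: w'_def)
      then show ?thesis using less(1)[of w'] that by blast
    qed
    have "w - (r' + Poly_Mapping.single (lt w) c) = (w' - r') + d" by (simp add: w'_def)
    then have "w - (r' + Poly_Mapping.single (lt w) c) \<in> V"
      using vec.subspace_add[OF V r'(1) d] by (simp only:)
    moreover have "Poly_Mapping.keys (r' + Poly_Mapping.single (lt w) c) \<inter> leading_terms V = {}"
      using keys_add[of r' "Poly_Mapping.single (lt w) c"] r'(2) c by (auto split: if_splits)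
    ultimately show ?thesis by blast
  qed
qed

lemma lt_remainder_le:
  assumes "w - r \<in> V" and "Poly_Mapping.keys r \<inter> leading_terms V = {}"
    and "r \<noteq> 0" and "w \<noteq> 0"
  shows "lt r \<le> lt w"
proof (rule ccontr)
  assume "\<not> lt r \<le> lt w"
  then have above_w: "lt w < lt r" by simp
  then have "lt r \<notin> Poly_Mapping.keys w" using key_le_lt[of "lt r" w] by auto
  then have lt_r_key: "lt r \<in> Poly_Mapping.keys (w - r)"
    using lt_in_keys[OF \<open>r \<noteq> 0\<close>] by (simp add: in_keys_iff lookup_minus)
  then have "w - r \<noteq> 0" and "lt r \<le> lt (w - r)" using key_le_lt by auto
  then have "lt (w - r) \<notin> Poly_Mapping.keys w" using above_w key_le_lt[of _ w] by fastforce
  then have "lt (w - r) \<in> Poly_Mapping.keys r"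
    using lt_in_keys[OF \<open>w - r \<noteq> 0\<close>] keys_diff[of w r] by blast
  then have "lt (w - r) = lt r" using key_le_lt[of _ r] \<open>lt r \<le> lt (w - r)\<close> by fastforce
  moreover have "lt (w - r) \<in> leading_terms V"
    using lt_in_leading_terms[OF assms(1) \<open>w - r \<noteq> 0\<close>] .
  ultimately show False using assms(2) lt_in_keys[OF \<open>r \<noteq> 0\<close>] by auto
qed

definition remainder :: "('g::wellorder, 'k::field) vec set \<Rightarrow> ('g, 'k) vec \<Rightarrow> ('g, 'k) vec" where
  "remainder V w = (SOME r. w - r \<in> V \<and> Poly_Mapping.keys r \<inter> leading_terms V = {})"

lemma remainder:
  assumes "vec.subspace V"
  shows "w - remainder V w \<in> V" and "Poly_Mapping.keys (remainder V w) \<inter> leading_terms V = {}"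
  using someI_ex[OF remainder_exists[OF assms, of w]] by (simp_all add: remainder_def)

lemma remainder_eqI:
  assumes "vec.subspace V" and "w - r \<in> V" and "Poly_Mapping.keys r \<inter> leading_terms V = {}"
  shows "remainder V w = r"
  using remainder_unique[OF assms(1) remainder[OF assms(1)] assms(2,3)] .

lemma is_linear_remainder:
  assumes V: "vec.subspace V"
  shows "is_linear (remainder V)"
  unfolding is_linear_def
proof (intro conjI allI)
  fix u w
  show "remainder V (u + w) = remainder V u + remainder V w"
  proof (rule remainder_eqI[OF V])
    show "u + w - (remainder V u + remainder V w) \<in> V"
      using vec.subspace_add[OF V remainder(1)[OF V, of u] remainder(1)[OF V, of w]]
      by (simp add: algebra_simps)
    show "Poly_Mapping.keys (remainder V u + remainder V w) \<inter> leading_terms V = {}"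
      using keys_add[of "remainder V u" "remainder V w"] remainder(2)[OF V, of u] remainder(2)[OF V, of w]
      by auto
  qed
next
  fix c w
  show "remainder V (smul c w) = smul c (remainder V w)"
  proof (rule remainder_eqI[OF V])
    show "smul c w - smul c (remainder V w) \<in> V"
      using vec.subspace_scale[OF V remainder(1)[OF V, of w]] by (simp add: vec.scale_right_diff_distrib)
    show "Poly_Mapping.keys (smul c (remainder V w)) \<inter> leading_terms V = {}"
      using keys_smul[of c "remainder V w"] remainder(2)[OF V, of w] by auto
  qed
qed

lemma remainder_bvec_le:
  assumes V: "vec.subspace V"
  shows "vle (remainder V (bvec g)) (bvec g)"
proof (cases "g \<in> leading_terms V")
  case False
  then have "remainder V (bvec g) = bvec g" by (intro remainder_eqI) (simp_all add: V vec.subspace_0)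
  then show ?thesis by (simp add: vle_def)
next
  case True
  have "lt (remainder V (bvec g)) < g" if "remainder V (bvec g) \<noteq> 0"
  proof -
    have "lt (remainder V (bvec g)) \<le> lt (bvec g)"
      using lt_remainder_le[OF remainder[OF V] that] by simp
    moreover have "lt (remainder V (bvec g)) \<noteq> g"
      using True remainder(2)[OF V, of "bvec g"] lt_in_keys[OF that] by auto
    ultimately show ?thesis by auto
  qed
  then show ?thesis by (auto simp: vle_def vless_def)
qed

lemma reduction_op_remainder:
  assumes V: "vec.subspace V"
  shows "reduction_op (remainder V)" and "kerop (remainder V) = V"
proof -
  have "remainder V (remainder V w) = remainder V w" for w
    by (rule remainder_eqI[OF V]) (simp_all add: vec.subspace_0[OF V] remainder(2)[OF V])
  then show "reduction_op (remainder V)"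
    using is_linear_remainder[OF V] remainder_bvec_le[OF V] by (simp add: reduction_op_def)
  show "kerop (remainder V) = V"
  proof
    show "kerop (remainder V) \<subseteq> V"
    proof
      fix w assume "w \<in> kerop (remainder V)"
      then show "w \<in> V" using remainder(1)[OF V, of w] by (simp add: kerop_def)
    qed
    show "V \<subseteq> kerop (remainder V)"
      using remainder_eqI[OF V, of _ 0] vec.subspace_0[OF V] by (auto simp: kerop_def)
  qed
qed

lemma reduction_op_eq_remainder:
  assumes T: "reduction_op T"
  shows "T = remainder (kerop T)"
proof
  fix w
  have "leading_terms (kerop T) \<subseteq> red T"
    using lt_kerop_red[OF T] by (auto simp: leading_terms_def kerop_def)
  then have "Poly_Mapping.keys (T w) \<inter> leading_terms (kerop T) = {}"
    using keys_reduction_op[OF T] by (auto simp: red_def)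
  then show "T w = remainder (kerop T) w"
    by (intro remainder_eqI[symmetric] subspace_kerop reduction_op_linear T
        reduction_op_diff_kerop)
qed

lemma kerinv_eq_remainder:
  assumes "vec.subspace V"
  shows "kerinv V = remainder V"
  unfolding kerinv_def
proof (rule the_equality)
  show "reduction_op (remainder V) \<and> kerop (remainder V) = V"
    using reduction_op_remainder[OF assms] by simp
  show "T = remainder V" if "reduction_op T \<and> kerop T = V" for T
    using reduction_op_eq_remainder[of T] that by simp
qed

lemma kerinv_spec:
  assumes "vec.subspace V"
  shows "reduction_op (kerinv V)" and "kerop (kerinv V) = V"
  using reduction_op_remainder[OF assms] by (simp_all add: kerinv_eq_remainder[OF assms])

section \<open>Sums of kernels and confluence\<close>

lemma subspace_sumker:
  assumes L: "\<And>T. T \<in> F \<Longrightarrow> is_linear T"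
  shows "vec.subspace (sumker F)"
  unfolding vec.subspace_def
proof (intro conjI ballI allI)
  show "0 \<in> sumker F" unfolding sumker_def by (auto intro!: exI[of _ "{}"])
next
  fix u w assume "u \<in> sumker F" "w \<in> sumker F"
  then obtain A f B f' where
    u: "u = (\<Sum>T\<in>A. f T)" "finite A" "A \<subseteq> F" "\<forall>T\<in>A. f T \<in> kerop T" and
    w: "w = (\<Sum>T\<in>B. f' T)" "finite B" "B \<subseteq> F" "\<forall>T\<in>B. f' T \<in> kerop T"
    unfolding sumker_def by blast
  define h where "h T = (if T \<in> A then f T else 0) + (if T \<in> B then f' T else 0)" for T
  have "u + w = (\<Sum>T\<in>A \<union> B. h T)"
    unfolding h_def sum.distrib u(1) w(1)
    using sum.inter_restrict[of "A \<union> B" f A] sum.inter_restrict[of "A \<union> B" f' B] u(2) w(2)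
    by (simp add: Int_absorb1 Int_commute)
  moreover have "h T \<in> kerop T" if "T \<in> A \<union> B" for T
  proof -
    have K: "vec.subspace (kerop T)" using that u(3) w(3) by (intro subspace_kerop L) blast
    show ?thesis
      unfolding h_def using u(4) w(4) by (intro vec.subspace_add[OF K]) (simp_all add: vec.subspace_0[OF K])
  qed
  ultimately show "u + w \<in> sumker F" unfolding sumker_def using u(2,3) w(2,3) by blast
next
  fix c u assume "u \<in> sumker F"
  then obtain A f where u: "u = (\<Sum>T\<in>A. f T)" "finite A" "A \<subseteq> F" "\<forall>T\<in>A. f T \<in> kerop T"
    unfolding sumker_def by blast
  have "smul c u = (\<Sum>T\<in>A. smul c (f T))" by (simp add: u(1) vec.scale_sum_right)
  moreover have "\<forall>T\<in>A. smul c (f T) \<in> kerop T"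
    using u(3,4) L vec.subspace_scale[OF subspace_kerop] by blast
  ultimately show "smul c u \<in> sumker F" unfolding sumker_def using u(2,3) by blast
qed

lemma kerop_subset_sumker: "T \<in> F \<Longrightarrow> kerop T \<subseteq> sumker F"
proof
  fix v assume "T \<in> F" "v \<in> kerop T"
  then show "v \<in> sumker F" unfolding sumker_def by (intro CollectI exI[of _ "{T}"]) auto
qed

lemma sumker_mono: "F \<subseteq> F' \<Longrightarrow> sumker F \<subseteq> sumker F'"
  unfolding sumker_def by blast

lemma sumker_least:
  assumes "vec.subspace W" and "\<And>T. T \<in> F \<Longrightarrow> kerop T \<subseteq> W"
  shows "sumker F \<subseteq> W"
  unfolding sumker_def using assms by (auto intro!: vec.subspace_sum)

lemma sumker_empty: "sumker {} = {0}"
  by (auto simp: sumker_def)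

lemma meet_spec:
  assumes "\<And>T. T \<in> F \<Longrightarrow> is_linear T"
  shows "reduction_op (meet F)" and "kerop (meet F) = sumker F"
  unfolding meet_def using kerinv_spec[OF subspace_sumker[OF assms]] by simp_all

lemma CF_spec:
  fixes F :: "('g::wellorder, 'k::field) op set"
  assumes "\<And>T. T \<in> F \<Longrightarrow> is_linear T"
  shows "reduction_op (CF F)"
    and "kerop (CF F) = sumker F \<inter> {w. Poly_Mapping.keys w \<subseteq> nfF F}"
proof -
  have "lspan (bvec ` nfF F) = {w :: ('g, 'k) vec. Poly_Mapping.keys w \<subseteq> nfF F}"
    by (auto simp: mem_lspan_bvec)
  then have "kerop (kerinv (lspan (bvec ` nfF F))) = {w :: ('g, 'k) vec. Poly_Mapping.keys w \<subseteq> nfF F}"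
    by (simp add: kerinv_spec(2)[OF subspace_keys_subset])
  then have "kerop (meet F) \<inter> kerop (kerinv (lspan (bvec ` nfF F)))
      = sumker F \<inter> {w. Poly_Mapping.keys w \<subseteq> nfF F}"
    by (simp add: meet_spec(2)[OF assms])
  moreover have "vec.subspace (sumker F \<inter> {w. Poly_Mapping.keys w \<subseteq> nfF F})"
    by (intro vec.subspace_inter subspace_sumker subspace_keys_subset assms)
  ultimately show "reduction_op (CF F)"
    and "kerop (CF F) = sumker F \<inter> {w. Poly_Mapping.keys w \<subseteq> nfF F}"
    unfolding CF_def join_def using kerinv_spec by simp_all
qed

lemma nf_meet_subset:
  assumes R: "\<And>T. T \<in> X \<Longrightarrow> reduction_op T"
  shows "nf (meet X) \<subseteq> nfF X"
proof -
  have M: "reduction_op (meet X)" "kerop (meet X) = sumker X"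
    using meet_spec[OF reduction_op_linear[OF R]] by blast+
  have "red T \<subseteq> red (meet X)" if "T \<in> X" for T
    using red_subset_if_kerop_subset[OF R[OF that] M(1)] kerop_subset_sumker[OF that] M(2) by blast
  then show ?thesis by (auto simp: nfF_def red_def)
qed

text \<open>An obstruction g gives the nonzero vector g - (\<and>X) g of the sum of the kernels, whose
  keys are g and normal forms of \<and>X, hence normal forms of X.\<close>
lemma confluentI:
  assumes R: "\<And>T. T \<in> X \<Longrightarrow> reduction_op T"
    and no_nf_kernel: "\<And>v. v \<in> sumker X \<Longrightarrow> Poly_Mapping.keys v \<subseteq> nfF X \<Longrightarrow> v = 0"
  shows "confluent X"
  unfolding confluent_def obs_def
proof (rule ccontr)
  assume "nfF X - nf (meet X) \<noteq> {}"
  then obtain g where g: "g \<in> nfF X" "g \<in> red (meet X)" by (auto simp: red_def)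
  define M where "M = meet X"
  have M: "reduction_op M" "kerop M = sumker X"
    unfolding M_def using meet_spec[OF reduction_op_linear[OF R]] by blast+
  have "Poly_Mapping.keys (bvec g - M (bvec g)) \<subseteq> {g} \<union> nf M"
    using keys_diff[of "bvec g" "M (bvec g)"] keys_reduction_op[OF M(1), of "bvec g"] by auto
  also have "\<dots> \<subseteq> nfF X" using g(1) nf_meet_subset[OF R] unfolding M_def by blast
  finally have "bvec g - M (bvec g) = 0"
    using no_nf_kernel reduction_vector(1)[OF M(1)] g(2) M(2) unfolding M_def by blast
  with reduction_vector(2)[OF M(1)] g(2) show False unfolding M_def by blast
qed

lemma confluent_if_kernel_member:
  assumes R: "\<And>T. T \<in> X \<Longrightarrow> reduction_op T" and "C \<in> X"
    and "sumker X \<inter> {v. Poly_Mapping.keys v \<subseteq> nfF X} \<subseteq> kerop C"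
  shows "confluent X"
proof (rule confluentI[OF R])
  fix v assume "v \<in> sumker X" "Poly_Mapping.keys v \<subseteq> nfF X"
  moreover have "nfF X \<subseteq> nf C" using \<open>C \<in> X\<close> by (auto simp: nfF_def)
  ultimately show "v = 0"
    using kerop_nf_span_zero[OF R[OF \<open>C \<in> X\<close>]] assms(3) by (auto simp: kerop_def)
qed

lemma confluent_empty: "confluent {}"
  by (rule confluentI) (auto simp: sumker_empty)

lemma confluent_singleton: "reduction_op T \<Longrightarrow> confluent {T}"
  by (rule confluent_if_kernel_member[of _ T]) (auto intro: sumker_least[OF subspace_kerop, THEN subsetD]
      simp: reduction_op_linear)

section \<open>The reduced family\<close>

lemma length_red_family [simp]: "length (red_family Ts) = length Ts"
  by (simp add: red_family_def)

lemma red_family_nth_bvec: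
  assumes "i < length Ts"
  shows "(red_family Ts ! i) (bvec g)
    = (if g \<in> red (Ts ! i) \<and> (i, g) \<in> lt_syz Ts then bvec g else (Ts ! i) (bvec g))"
  using assms by (simp add: red_family_def lin_ext_bvec)

lemma is_linear_red_family: "S \<in> set (red_family Ts) \<Longrightarrow> is_linear S"
  by (auto simp: red_family_def is_linear_lin_ext)

lemma nf_red_family: "i < length Ts \<Longrightarrow> nf (Ts ! i) \<subseteq> nf (red_family Ts ! i)"
  by (auto simp: nf_def red_def red_family_nth_bvec)

lemma nfF_red_family: "nfF (set Ts) \<subseteq> nfF (set (red_family Ts))"
  using nf_red_family by (fastforce simp: nfF_def in_set_conv_nth)

lemma kerop_red_family_subset:
  assumes "reduction_op (Ts ! i)" and "i < length Ts"
  shows "kerop (red_family Ts ! i) \<subseteq> kerop (Ts ! i)"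
proof (rule kerop_subset_if_reduction_vectors)
  show "is_linear (red_family Ts ! i)"
    using assms(2) is_linear_red_family[of "red_family Ts ! i" Ts] by simp
  show "vec.subspace (kerop (Ts ! i))" by (rule subspace_kerop[OF reduction_op_linear[OF assms(1)]])
  show "bvec g - (red_family Ts ! i) (bvec g) \<in> kerop (Ts ! i)" for g
    using reduction_op_diff_kerop[OF assms(1)]
      vec.subspace_0[OF subspace_kerop[OF reduction_op_linear[OF assms(1)]]]
    by (simp add: red_family_nth_bvec[OF assms(2)])
qed

text \<open>For p = (i, g), the i-th component g - T_i g of the basis element e_{i,g}.\<close>
definition ker_gen :: "('g::wellorder, 'k::field) op list \<Rightarrow> nat \<times> 'g \<Rightarrow> ('g, 'k) vec" where
  "ker_gen Ts p = bvec (snd p) - (Ts ! fst p) (bvec (snd p))"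

lemma sqless_iff_less: "sqless p q \<longleftrightarrow> p < q"
  by (cases p; cases q) (auto simp: sqless_def)

lemma lt_syz_relation:
  assumes "p \<in> lt_syz Ts"
  obtains Q c where "finite Q" and "\<And>q. q \<in> Q \<Longrightarrow> q < p \<and> fst q < length Ts"
    and "ker_gen Ts p = (\<Sum>q\<in>Q. smul (c q) (ker_gen Ts q))"
proof -
  obtain w S c where w: "w \<in> syz Ts" and S: "finite S" "S \<subseteq> eidx Ts" "p \<in> S"
    and c: "\<forall>q\<in>S. c q \<noteq> 0" and w_eq: "w = (\<lambda>j. \<Sum>q\<in>S. smul (c q) (ebas Ts (fst q) (snd q) j))"
    and below: "\<forall>q\<in>S. q = p \<or> sqless q p"
    using assms unfolding lt_syz_def by blast
  have idx: "fst q < length Ts" if "q \<in> S" for q using S(2) that by (auto simp: eidx_def)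
  have "0 = (\<Sum>j<length Ts. \<Sum>q\<in>S. smul (c q) (ebas Ts (fst q) (snd q) j))"
    using w by (simp add: syz_def w_eq)
  also have "\<dots> = (\<Sum>q\<in>S. smul (c q) (ker_gen Ts q))"
    by (subst sum.swap) (auto intro!: sum.cong simp: ebas_def ker_gen_def idx if_distrib cong: if_cong)
  also have "\<dots> = smul (c p) (ker_gen Ts p) + (\<Sum>q\<in>S - {p}. smul (c q) (ker_gen Ts q))"
    by (rule sum.remove[OF S(1,3)])
  finally have "smul (c p) (ker_gen Ts p) = - (\<Sum>q\<in>S - {p}. smul (c q) (ker_gen Ts q))"
    by (simp add: eq_neg_iff_add_eq_0)
  then have "smul (1 / c p) (smul (c p) (ker_gen Ts p))
      = smul (1 / c p) (- (\<Sum>q\<in>S - {p}. smul (c q) (ker_gen Ts q)))" by simp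
  then have "ker_gen Ts p = smul (1 / c p) (- (\<Sum>q\<in>S - {p}. smul (c q) (ker_gen Ts q)))"
    using c S(3) by simp
  also have "\<dots> = (\<Sum>q\<in>S - {p}. smul (- c q / c p) (ker_gen Ts q))"
    by (simp add: vec.scale_sum_right flip: sum_negf)
  finally have relation: "ker_gen Ts p = (\<Sum>q\<in>S - {p}. smul (- c q / c p) (ker_gen Ts q))" .
  moreover have "q < p \<and> fst q < length Ts" if "q \<in> S - {p}" for q
    using that below idx by (auto simp: sqless_iff_less)
  with relation S(1) show ?thesis by (intro that[of "S - {p}" "\<lambda>q. - c q / c p"]) auto
qed

text \<open>Induction along the order on the basis of the syzygy module: if e_p is a leading basis
  element of a syzygy, use the relation; otherwise the p-th reduced operator kills the generator.\<close>
lemma ker_gen_in_sumker_red_family: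
  assumes R: "\<And>T. T \<in> set Ts \<Longrightarrow> reduction_op T" and "fst p < length Ts"
  shows "ker_gen Ts p \<in> sumker (set (red_family Ts))"
  using assms(2)
proof (induction p rule: less_induct)
  case (less p)
  obtain i g where p: "p = (i, g)" by (cases p)
  define W where "W = sumker (set (red_family Ts))"
  have W: "vec.subspace W" unfolding W_def by (intro subspace_sumker is_linear_red_family)
  show ?case
  proof (cases "p \<in> lt_syz Ts")
    case True
    obtain Q c where "finite Q" and Q: "\<And>q. q \<in> Q \<Longrightarrow> q < p \<and> fst q < length Ts"
      and relation: "ker_gen Ts p = (\<Sum>q\<in>Q. smul (c q) (ker_gen Ts q))"
      using lt_syz_relation[OF True] by metis
    have "ker_gen Ts q \<in> W" if "q \<in> Q" for q using less.IH Q[OF that] by (simp add: W_def)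
    then show ?thesis unfolding relation W_def[symmetric]
      by (intro vec.subspace_sum[OF W] vec.subspace_scale[OF W])
  next
    case False
    define S where "S = red_family Ts ! i"
    have i: "i < length Ts" using less.prems by (simp add: p)
    have T: "reduction_op (Ts ! i)" using R i by simp
    have S: "S \<in> set (red_family Ts)" using i by (simp add: S_def)
    have "S (bvec g) = (Ts ! i) (bvec g)"
      using False by (simp add: S_def red_family_nth_bvec[OF i] p)
    moreover have "S ((Ts ! i) (bvec g)) = (Ts ! i) (bvec g)"
      using keys_reduction_op[OF T] nf_red_family[OF i]
      by (intro linear_fixes_nf_span is_linear_red_family[OF S]) (auto simp: S_def)
    ultimately have "ker_gen Ts p \<in> kerop S"
      by (simp add: kerop_def ker_gen_def p is_linear_diff[OF is_linear_red_family[OF S]])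
    then show ?thesis using kerop_subset_sumker[OF S] by blast
  qed
qed

lemma sumker_red_family:
  assumes R: "\<And>T. T \<in> set Ts \<Longrightarrow> reduction_op T"
  shows "sumker (set (red_family Ts)) = sumker (set Ts)"
proof
  show "sumker (set (red_family Ts)) \<subseteq> sumker (set Ts)"
  proof (rule sumker_least)
    show "vec.subspace (sumker (set Ts))" by (intro subspace_sumker reduction_op_linear R)
    fix S assume "S \<in> set (red_family Ts)"
    then obtain i where i: "i < length Ts" and "S = red_family Ts ! i" by (auto simp: in_set_conv_nth)
    then show "kerop S \<subseteq> sumker (set Ts)"
      using kerop_red_family_subset[OF R[OF nth_mem[OF i]] i] kerop_subset_sumker[of "Ts ! i" "set Ts"]
      by simp
  qed
next
  show "sumker (set Ts) \<subseteq> sumker (set (red_family Ts))"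
  proof (rule sumker_least)
    show W: "vec.subspace (sumker (set (red_family Ts)))"
      by (intro subspace_sumker is_linear_red_family)
    fix T assume "T \<in> set Ts"
    then obtain i where i: "i < length Ts" and T: "T = Ts ! i" by (auto simp: in_set_conv_nth)
    show "kerop T \<subseteq> sumker (set (red_family Ts))"
    proof (rule kerop_subset_if_reduction_vectors[OF _ W])
      show "is_linear T" using R \<open>T \<in> set Ts\<close> by (simp add: reduction_op_linear)
      show "bvec g - T (bvec g) \<in> sumker (set (red_family Ts))" for g
        using ker_gen_in_sumker_red_family[OF R, where p = "(i, g)"] i by (simp add: T ker_gen_def)
    qed
  qed
qed

section \<open>Incremental completion\<close>

lemma nth_mem_incF: "i \<le> k \<Longrightarrow> Ss ! i \<in> incF Ss k"
  by (induction k) (auto simp: le_Suc_eq)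

lemma CF_mem_incC: "1 \<le> k \<Longrightarrow> k < length Ss \<Longrightarrow> CF (incF Ss (k - 1) \<union> {Ss ! k}) \<in> incC Ss"
  by (auto simp: incC_def)

lemma incF_subset: "k < length Ss \<Longrightarrow> incF Ss k \<subseteq> set Ss \<union> incC Ss"
proof (induction k)
  case (Suc k)
  then show ?case using CF_mem_incC[of "Suc k" Ss] by auto
qed simp

lemma incC_short: "length Ss \<le> 1 \<Longrightarrow> incC Ss = {}"
  by (auto simp: incC_def)

lemma CF_kerop_subset:
  assumes "vec.subspace K" and "\<And>T. T \<in> Y \<Longrightarrow> is_linear T \<and> kerop T \<subseteq> K"
  shows "reduction_op (CF Y)" and "kerop (CF Y) \<subseteq> K"
proof -
  have L: "\<And>T. T \<in> Y \<Longrightarrow> is_linear T" using assms(2) by blast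
  show "reduction_op (CF Y)" by (rule CF_spec(1)[OF L])
  have "sumker Y \<subseteq> K" by (rule sumker_least[OF assms(1)]) (use assms(2) in blast)
  then show "kerop (CF Y) \<subseteq> K" using CF_spec(2)[OF L] by blast
qed

lemma incF_kerop_subset:
  assumes "vec.subspace K" and "\<And>S. S \<in> set Ss \<Longrightarrow> is_linear S \<and> kerop S \<subseteq> K"
    and "k < length Ss" and "T \<in> incF Ss k"
  shows "is_linear T \<and> kerop T \<subseteq> K"
  using assms(3,4)
proof (induction k arbitrary: T)
  case 0
  then show ?case using assms(2) by simp
next
  case (Suc k)
  have Y: "is_linear T' \<and> kerop T' \<subseteq> K" if "T' \<in> incF Ss k \<union> {Ss ! Suc k}" for T'
    using that Suc.IH Suc.prems(1) assms(2)[OF nth_mem[OF Suc.prems(1)]] by auto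
  from Suc.prems(2) consider "T \<in> incF Ss k \<union> {Ss ! Suc k}" | "T = CF (incF Ss k \<union> {Ss ! Suc k})"
    by auto
  then show ?case
  proof cases
    case 2
    then show ?thesis using CF_kerop_subset[OF assms(1) Y] reduction_op_linear by blast
  qed (rule Y)
qed

lemma incC_kerop_subset:
  assumes "vec.subspace K" and "\<And>S. S \<in> set Ss \<Longrightarrow> is_linear S \<and> kerop S \<subseteq> K"
    and "C \<in> incC Ss"
  shows "reduction_op C" and "kerop C \<subseteq> K"
proof -
  obtain k where "1 \<le> k" "k < length Ss" and C: "C = CF (incF Ss (k - 1) \<union> {Ss ! k})"
    using assms(3) by (auto simp: incC_def)
  have "is_linear T \<and> kerop T \<subseteq> K" if "T \<in> incF Ss (k - 1) \<union> {Ss ! k}" for T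
  proof (cases "T = Ss ! k")
    case True
    then show ?thesis using assms(2) \<open>k < length Ss\<close> by simp
  next
    case False
    then show ?thesis
      using that incF_kerop_subset[of K Ss "k - 1" T] assms(1,2) \<open>k < length Ss\<close> by auto
  qed
  then show "reduction_op C" and "kerop C \<subseteq> K"
    unfolding C by (intro CF_kerop_subset[OF assms(1)]; blast)+
qed

lemma last_incremental_step:
  assumes "2 \<le> length Ss"
  shows "CF (incF Ss (length Ss - 2) \<union> {Ss ! (length Ss - 1)}) \<in> incC Ss"
    and "set Ss \<subseteq> incF Ss (length Ss - 2) \<union> {Ss ! (length Ss - 1)}"
    and "incF Ss (length Ss - 2) \<union> {Ss ! (length Ss - 1)} \<subseteq> set Ss \<union> incC Ss"
proof -
  show "CF (incF Ss (length Ss - 2) \<union> {Ss ! (length Ss - 1)}) \<in> incC Ss"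
    using CF_mem_incC[of "length Ss - 1" Ss] assms by (simp add: numeral_2_eq_2)
  show "set Ss \<subseteq> incF Ss (length Ss - 2) \<union> {Ss ! (length Ss - 1)}"
  proof
    fix S assume "S \<in> set Ss"
    then obtain i where "i < length Ss" "S = Ss ! i" by (auto simp: in_set_conv_nth)
    then show "S \<in> incF Ss (length Ss - 2) \<union> {Ss ! (length Ss - 1)}"
      using nth_mem_incF[of i "length Ss - 2" Ss] by (cases "i = length Ss - 1") auto
  qed
  show "incF Ss (length Ss - 2) \<union> {Ss ! (length Ss - 1)} \<subseteq> set Ss \<union> incC Ss"
    using incF_subset[of "length Ss - 2" Ss] assms by auto
qed

text \<open>The last operator C_n = C^Y, Y = F_{n-1} \<union> {S_n}, witnesses confluence: Y contains every
  S_i, so the sum of its kernels contains that of F, and nf(Y) contains nf(F \<union> C).\<close>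
theorem incremental_completion:
  assumes R: "\<And>T. T \<in> F \<Longrightarrow> reduction_op T"
    and L: "\<And>S. S \<in> set Ss \<Longrightarrow> is_linear S"
    and sumker_eq: "sumker (set Ss) = sumker F"
    and nf_subset: "nfF F \<subseteq> nfF (set Ss)"
    and len: "2 \<le> length Ss"
  shows "is_completion (F \<union> incC Ss) F"
proof -
  define K where "K = sumker F"
  define X where "X = F \<union> incC Ss"
  define Y where "Y = incF Ss (length Ss - 2) \<union> {Ss ! (length Ss - 1)}"
  note last = last_incremental_step[OF len, folded Y_def]
  have K: "vec.subspace K" unfolding K_def by (intro subspace_sumker reduction_op_linear R)
  have Ss_K: "is_linear S \<and> kerop S \<subseteq> K" if "S \<in> set Ss" for S
    using L[OF that] kerop_subset_sumker[OF that] sumker_eq by (simp add: K_def)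
  note incC = incC_kerop_subset[OF K Ss_K]
  have X_R: "reduction_op T" if "T \<in> X" for T using that R incC(1) by (auto simp: X_def)
  have sumker_X: "sumker X = K"
  proof
    show "sumker X \<subseteq> K"
      using incC(2) kerop_subset_sumker[of _ F] by (intro sumker_least[OF K]) (auto simp: X_def K_def)
    show "K \<subseteq> sumker X" unfolding K_def X_def by (rule sumker_mono) blast
  qed
  have Y_L: "is_linear T" if "T \<in> Y" for T
    using that last(3) L incC(1) reduction_op_linear by blast
  have "sumker X \<subseteq> sumker Y"
    using sumker_mono[OF last(2)] sumker_X sumker_eq by (simp add: K_def)
  moreover have "nfF X \<subseteq> nfF Y" using last(3) nf_subset by (auto simp: nfF_def X_def)
  ultimately have "sumker X \<inter> {v. Poly_Mapping.keys v \<subseteq> nfF X} \<subseteq> kerop (CF Y)"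
    using CF_spec(2)[OF Y_L] by blast
  then have "confluent X"
    using last(1) by (intro confluent_if_kernel_member[of X "CF Y"] X_R) (auto simp: X_def)
  moreover have "meet X = meet F" by (simp add: meet_def sumker_X K_def)
  ultimately show ?thesis using X_R by (auto simp: is_completion_def X_def)
qed

theorem mainTheorem8:
  fixes Ts :: "('g::wellorder, 'k::field) op list"
  assumes "\<forall>T\<in>set Ts. reduction_op T"
  shows "is_completion (set Ts \<union> incC (red_family Ts)) (set Ts)"
proof (cases "length Ts \<le> 1")
  case True
  then have "set Ts = {} \<or> (\<exists>T. set Ts = {T})"
    by (cases Ts) auto
  then have "confluent (set Ts)" using assms confluent_empty confluent_singleton by auto
  then show ?thesis using True assms by (simp add: incC_short is_completion_def)
next
  case False
  show ?thesis
    using assms False sumker_red_family[of Ts] nfF_red_family[of Ts]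
    by (intro incremental_completion is_linear_red_family) auto
qed

end
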